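(* Let $x,y,z$ be real numbers with $x\ge 2$ such that $\Psi(x+z,y)-\Psi(x,y)>\pi(y)$. Then $g(\lfloor x\rfloor)<z$.
   Context: $\pi(y)$ is the number of primes $\le y$. For real $x,y$, $\Psi(x,y)$ denotes the number of positive integers $\le x$ all of whose prime factors are $\le y$. For integers $n>1$ and $k\ge 1$, say that $(n,k)$ has a prime representation if there are distinct primes $P_1,\dots,P_k$ with $P_j\mid (n+j)$ for $1\le j\le k$; $g(n)$ is the largest positive integer $k$ such that $(n,k)$ has a prime representation. *)

theory Defs
  imports Complex_Main "HOL-Computational_Algebra.Primes"
begin

definition prime_pi :: "real \<Rightarrow> nat" where
  "prime_pi y = card {p::nat. prime p \<and> real p \<le> y}"

definition Psi :: "real \<Rightarrow> real \<Rightarrow> nat" where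
  "Psi x y = card {m::nat. 1 \<le> m \<and> real m \<le> x \<and> (\<forall>p. prime p \<and> p dvd m \<longrightarrow> real p \<le> y)}"

definition prime_rep :: "nat \<Rightarrow> nat \<Rightarrow> bool" where
  "prime_rep n k \<longleftrightarrow> (\<exists>P::nat \<Rightarrow> nat. inj_on P {1..k} \<and>
      (\<forall>j\<in>{1..k}. prime (P j) \<and> P j dvd n + j))"

definition g :: "nat \<Rightarrow> nat" where
  "g n = (GREATEST k. 1 \<le> k \<and> prime_rep n k)"

end

theory Submission
  imports Defs
begin

text \<open>If \<open>(\<lfloor>x\<rfloor>, k)\<close> has a prime representation \<open>P\<^sub>1, \<dots>, P\<^sub>k\<close> with \<open>k \<ge> z\<close>, then every
  \<open>y\<close>-smooth integer \<open>m = \<lfloor>x\<rfloor> + j\<close> in \<open>(x, x + z]\<close> is divisible by the prime \<open>P\<^sub>j \<le> y\<close>.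
  Since the \<open>P\<^sub>j\<close> are distinct, this injects the \<open>y\<close>-smooth integers of \<open>(x, x + z]\<close>, of which
  there are at least \<open>\<Psi>(x + z, y) - \<Psi>(x, y)\<close>, into the primes up to \<open>y\<close>.\<close>

definition smooth :: "real \<Rightarrow> nat \<Rightarrow> bool" where
  "smooth y m \<longleftrightarrow> (\<forall>p. prime p \<and> p dvd m \<longrightarrow> real p \<le> y)"

lemma finite_nat_le_real: "finite {m::nat. real m \<le> x \<and> P m}"
  by (rule finite_subset[of _ "{..nat \<lceil>x\<rceil>}"]) (auto, linarith)

lemma Psi_le_Psi_add_card_smooth:
  "Psi b y \<le> Psi a y + card {m. a < real m \<and> real m \<le> b \<and> smooth y m}"
proof -
  let ?A = "{m::nat. 1 \<le> m \<and> real m \<le> b \<and> smooth y m}"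
  let ?B = "{m::nat. 1 \<le> m \<and> real m \<le> a \<and> smooth y m}"
  let ?S = "{m::nat. a < real m \<and> real m \<le> b \<and> smooth y m}"
  have "?A \<subseteq> ?B \<union> ?S" by auto
  moreover have "finite ?B" "finite ?S"
    using finite_nat_le_real[of a] finite_nat_le_real[of b] by (simp_all add: conj_commute)
  ultimately have "card ?A \<le> card ?B + card ?S"
    by (meson card_Un_le card_mono finite_UnI order_trans)
  then show ?thesis by (simp add: Psi_def smooth_def)
qed

lemma card_smooth_le_prime_pi_if_prime_rep:
  assumes "prime_rep n k"
  shows "card {m. n < m \<and> m \<le> n + k \<and> smooth y m} \<le> prime_pi y"
proof -
  obtain P where P_inj: "inj_on P {1..k}" and P_dvd: "\<forall>j\<in>{1..k}. prime (P j) \<and> P j dvd n + j"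
    using assms unfolding prime_rep_def by blast
  let ?S = "{m. n < m \<and> m \<le> n + k \<and> smooth y m}"
  let ?Q = "{p::nat. prime p \<and> real p \<le> y}"
  have shift: "m - n \<in> {1..k}" "n + (m - n) = m" if "m \<in> ?S" for m
    using that by auto
  have "(\<lambda>m. P (m - n)) ` ?S \<subseteq> ?Q"
  proof
    fix q assume "q \<in> (\<lambda>m. P (m - n)) ` ?S"
    then obtain m where m: "m \<in> ?S" "q = P (m - n)" by blast
    then have "prime q" "q dvd m" using P_dvd shift[OF m(1)] by metis+
    with m(1) show "q \<in> ?Q" by (simp add: smooth_def)
  qed
  moreover have "inj_on (\<lambda>m. P (m - n)) ?S"
    by (rule inj_onI) (metis P_inj inj_onD shift)
  moreover have "finite ?Q"
    using finite_nat_le_real[of y prime] by (simp add: conj_commute)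
  ultimately show ?thesis
    unfolding prime_pi_def by (meson card_inj_on_le)
qed

lemma prime_rep_floor_lt:
  fixes x y z :: real
  assumes "x \<ge> 0"
    and "real (Psi (x + z) y) - real (Psi x y) > real (prime_pi y)"
    and "prime_rep (nat \<lfloor>x\<rfloor>) k"
  shows "real k < z"
proof (rule ccontr)
  assume "\<not> real k < z"
  define n where "n = nat \<lfloor>x\<rfloor>"
  let ?S = "{m. x < real m \<and> real m \<le> x + z \<and> smooth y m}"
  let ?T = "{m. n < m \<and> m \<le> n + k \<and> smooth y m}"
  have "?S \<subseteq> ?T"
    using \<open>x \<ge> 0\<close> \<open>\<not> real k < z\<close> unfolding n_def by auto linarith+
  then have "card ?S \<le> card ?T"
    by (rule card_mono[rotated]) (use finite_nat_le_real[of "real (n + k)"] in \<open>simp add: conj_commute\<close>)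
  also have "\<dots> \<le> prime_pi y"
    using assms(3) unfolding n_def by (rule card_smooth_le_prime_pi_if_prime_rep)
  finally show False
    using assms(2) Psi_le_Psi_add_card_smooth[of "x + z" y x] by linarith
qed

lemma prime_rep_one: "n \<ge> 1 \<Longrightarrow> prime_rep n 1"
  using prime_factor_nat[of "n + 1"] unfolding prime_rep_def by auto

lemma prime_rep_g:
  assumes "n \<ge> 1" and "\<And>k. prime_rep n k \<Longrightarrow> k \<le> b"
  shows "prime_rep n (g n)"
proof -
  have "1 \<le> g n \<and> prime_rep n (g n)"
    unfolding g_def
    by (rule GreatestI_nat[of _ 1 b]) (use assms prime_rep_one in auto)
  then show ?thesis ..
qed

theorem lemma2p4:
  fixes x y z :: real
  assumes "x \<ge> 2"
    and "real (Psi (x + z) y) - real (Psi x y) > real (prime_pi y)"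
  shows "real (g (nat \<lfloor>x\<rfloor>)) < z"
proof -
  have rep_lt: "prime_rep (nat \<lfloor>x\<rfloor>) k \<Longrightarrow> real k < z" for k
    using prime_rep_floor_lt[of x y z k] assms by simp
  have "prime_rep (nat \<lfloor>x\<rfloor>) (g (nat \<lfloor>x\<rfloor>))"
  proof (rule prime_rep_g)
    show "nat \<lfloor>x\<rfloor> \<ge> 1" using assms(1) by linarith
    show "k \<le> nat \<lceil>z\<rceil>" if "prime_rep (nat \<lfloor>x\<rfloor>) k" for k
      using rep_lt[OF that] by linarith
  qed
  then show ?thesis by (rule rep_lt)
qed

end
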